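(* Let $\hat{\mathcal{C}}_k=\langle\hat c_k,\hat G_k,\hat A_k,\hat b_k\rangle\subset\mathbb{R}^n$ be a constrained zonotope with $\mathcal{R}_{\phi,k}\subseteq\hat{\mathcal{C}}_k$. For $i=1,\dots,n_{\phi,k}$ let the side information at step $k$ be encoded by a set $\mathcal{S}_{i,k}\subseteq\mathbb{R}^n$ such that every $x\in\mathcal{R}_{\phi,k}$ lies in $\mathcal{S}_{i,k}$, where each $\mathcal{S}_{i,k}$ is of one of two types: (linear) $\mathcal{S}_{i,k}=\{x:|H_{i,k}x-y_{i,k}|\le r_{i,k}\}$ with $H_{i,k}\in\mathbb{R}^{p\times n}$, $y_{i,k}\in\mathbb{R}^p$, $r_{i,k}\in\mathbb{R}^p_{\ge0}$; (nonlinear) $\mathcal{S}_{i,k}=\{x:|h_{i,k}(x)|\le r_{i,k}\}$ with $h_{i,k}:\mathbb{R}^n\to\mathbb{R}^p$ differentiable and $r_{i,k}\in\mathbb{R}^p_{\ge0}$ (absolute values and inequalities componentwise). Run the following procedure. Initialize $(\bar c_k,\bar G_k,\bar A_k,\bar b_k)=(\hat c_k,\hat G_k,\hat A_k,\hat b_k)$. For $i=1,\dots,n_{\phi,k}$ in order (all right-hand sides using the values before the update): - in the linear case, set $\bar G_k\leftarrow[\bar G_k,\ 0]$, $\bar A_k\leftarrow\begin{bmatrix}\bar A_k&0\\ H_{i,k}\bar G_k&-\operatorname{diag}(r_{i,k})\end{bmatrix}$, $\bar b_k\leftarrow\begin{bmatrix}\bar b_k\\ y_{i,k}-H_{i,k}\bar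 c_k\end{bmatrix}$, and keep $\bar c_k$; - in the nonlinear case, pick a point $x^*_{i,k}\in\mathbb{R}^n$, let $J_{i,k}=\frac{\partial h_{i,k}}{\partial x}\big|_{x^*_{i,k}}$, and pick a zonotope $\langle c_{L,i,k},G_{L,i,k}\rangle\subset\mathbb{R}^p$ such that $h_{i,k}(x)-h_{i,k}(x^*_{i,k})-J_{i,k}(x-x^*_{i,k})\in\langle c_{L,i,k},G_{L,i,k}\rangle$ for every $x$ in the current constrained zonotope $\langle\bar c_k,\bar G_k,\bar A_k,\bar b_k\rangle$; then set $\bar G_k\leftarrow[\bar G_k,\ 0,\ 0]$, $\bar A_k\leftarrow\begin{bmatrix}\bar A_k&0&0\\ J_{i,k}\bar G_k&-\operatorname{diag}(r_{i,k})&G_{L,i,k}\end{bmatrix}$, $\bar b_k\leftarrow\begin{bmatrix}\bar b_k\\ -h_{i,k}(x^*_{i,k})-J_{i,k}(\bar c_k-x^*_{i,k})-c_{L,i,k}\end{bmatrix}$, and keep $\bar c_k$. Then the resulting constrained zonotope $\bar{\mathcal{C}}_k=\langle\bar c_k,\bar G_k,\bar A_k,\bar b_k\rangle$ satisfies $\bar{\mathcal{C}}_k\supseteq\mathcal{R}_{\phi,k}$.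
   Context: A zonotope with center $c\in\mathbb{R}^n$ and generator matrix $G\in\mathbb{R}^{n\times\gamma}$ is $\langle c,G\rangle=\{c+G\beta:\beta\in[-1,1]^\gamma\}$. A constrained zonotope is $\langle c,G,A,b\rangle=\{c+G\beta:\ A\beta=b,\ \beta\in[-1,1]^{n_g}\}$ with $c\in\mathbb{R}^n$, $G\in\mathbb{R}^{n\times n_g}$, $A\in\mathbb{R}^{n_c\times n_g}$, $b\in\mathbb{R}^{n_c}$ (zero blocks above have the sizes needed to make the matrices conformable). Consider the discrete-time system $x(k+1)=f(x(k),u(k))+w(k)$ with $f$ an unknown twice differentiable function, process noise $w(k)\in\mathcal{Z}_w$ ($\mathcal{Z}_w$ a zonotope), inputs $u(k)\in\mathcal{U}_k$ (zonotopes), initial set $\mathcal{X}_0$ (a zonotope), and signal temporal logic side-information formulas $\phi_k=\phi_{1,k}\wedge\dots\wedge\phi_{n_{\phi,k},k}$ for each step $k$. The STL-constrained reachable set is $\mathcal{R}_{\phi,N}=\{x(N)\in\mathbb{R}^n:\ x(0)\in\mathcal{X}_0,\ x(0)\models\phi_0,\ \text{and for all }k\in\{0,\dots,N-1\}:\ x(k+1)=f(x(k),u(k))+w(k),\ w(k)\in\mathcal{Z}_w,\ u(k)\in\mathcal{U}_k,\ x(k+1)\models\phi_{k+1}\}$. For $r\in\mathbb{R}^p$, $\operatorname{diag}(r)$ denotes the diagonal matrix with diagonal $r$. *)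

theory Defs
  imports "HOL-Analysis.Analysis"
begin

text \<open>The number of generators ng and
 the number of constraints nc change during the procedure, so generators and
 constraint data are stored as nat-indexed functions together with their sizes:
 czG j is the j-th column of G (j < ng), czA i j the entries of A (i < nc, j < ng),
 czb i the entries of b (i < nc).\<close>

record ('n::finite) cz =
  czc  :: "real^'n"
  czG  :: "nat \<Rightarrow> real^'n"
  czng :: nat
  czA  :: "nat \<Rightarrow> nat \<Rightarrow> real"
  czb  :: "nat \<Rightarrow> real"
  cznc :: nat

definition czset :: "('n::finite) cz \<Rightarrow> (real^'n) set" where
  "czset Z = {czc Z + (\<Sum>j<czng Z. \<beta> j *\<^sub>R czG Z j) | \<beta>.
      (\<forall>j<czng Z. \<bar>\<beta> j\<bar> \<le> 1) \<and>
      (\<forall>i<cznc Z. (\<Sum>j<czng Z. czA Z i j * \<beta> j) = czb Z i)}"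

text \<open>Zonotope <cL, GL> in R^p with nL generators; vectors of R^p are functions
 nat => real of which only the components l < p matter.\<close>

definition zono :: "nat \<Rightarrow> (nat \<Rightarrow> real) \<Rightarrow> (nat \<Rightarrow> nat \<Rightarrow> real) \<Rightarrow> nat \<Rightarrow> (nat \<Rightarrow> real) set" where
  "zono p cL GL nL = {v. \<exists>\<gamma>. (\<forall>j<nL. \<bar>\<gamma> j\<bar> \<le> 1) \<and>
      (\<forall>l<p. v l = cL l + (\<Sum>j<nL. GL l j * \<gamma> j))}"

text \<open>SNonlin p h r xs J cL GL nL :  S = {x. |h x| <= r} with h x l the l-th component
   (l < p); xs is the linearization point x*, J l the l-th row of the Jacobian at xs,
   and <cL, GL> (nL generators) the chosen Lagrange-remainder zonotope.\<close>

datatype ('n::finite) sinfo =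
    SLin nat "nat \<Rightarrow> real^'n" "nat \<Rightarrow> real" "nat \<Rightarrow> real"
  | SNonlin nat "real^'n \<Rightarrow> nat \<Rightarrow> real" "nat \<Rightarrow> real" "real^'n" "nat \<Rightarrow> real^'n"
      "nat \<Rightarrow> real" "nat \<Rightarrow> nat \<Rightarrow> real" nat

fun sinfo_set :: "('n::finite) sinfo \<Rightarrow> (real^'n) set" where
  "sinfo_set (SLin p H y r) = {x. \<forall>l<p. \<bar>H l \<bullet> x - y l\<bar> \<le> r l}"
| "sinfo_set (SNonlin p h r xs J cL GL nL) = {x. \<forall>l<p. \<bar>h x l\<bar> \<le> r l}"

fun wf_sinfo :: "('n::finite) sinfo \<Rightarrow> bool" where
  "wf_sinfo (SLin p H y r) = (\<forall>l<p. 0 \<le> r l)"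
| "wf_sinfo (SNonlin p h r xs J cL GL nL) =
     ((\<forall>l<p. 0 \<le> r l) \<and>
      (\<forall>l<p. \<forall>x. (\<lambda>z. h z l) differentiable (at x)) \<and>
      (\<forall>l<p. ((\<lambda>z. h z l) has_derivative (\<lambda>v. J l \<bullet> v)) (at xs)))"

fun cz_step :: "('n::finite) sinfo \<Rightarrow> 'n cz \<Rightarrow> 'n cz" where
  "cz_step (SLin p H y r) Z =
     \<lparr> czc = czc Z,
       czG = (\<lambda>j. if j < czng Z then czG Z j else 0),
       czng = czng Z + p,
       czA = (\<lambda>i j. if i < cznc Z then (if j < czng Z then czA Z i j else 0)
                    else (if j < czng Z then H (i - cznc Z) \<bullet> czG Z j
                          else if j < czng Z + p then
                            (if j - czng Z = i - cznc Z then - r (i - cznc Z) else 0)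
                          else 0)),
       czb = (\<lambda>i. if i < cznc Z then czb Z i
                  else y (i - cznc Z) - H (i - cznc Z) \<bullet> czc Z),
       cznc = cznc Z + p \<rparr>"
| "cz_step (SNonlin p h r xs J cL GL nL) Z =
     \<lparr> czc = czc Z,
       czG = (\<lambda>j. if j < czng Z then czG Z j else 0),
       czng = czng Z + p + nL,
       czA = (\<lambda>i j. if i < cznc Z then (if j < czng Z then czA Z i j else 0)
                    else (if j < czng Z then J (i - cznc Z) \<bullet> czG Z j
                          else if j < czng Z + p then
                            (if j - czng Z = i - cznc Z then - r (i - cznc Z) else 0)
                          else if j < czng Z + p + nL then GL (i - cznc Z) (j - czng Z - p)
                          else 0)),
       czb = (\<lambda>i. if i < cznc Z then czb Z i
                  else - h xs (i - cznc Z) - J (i - cznc Z) \<bullet> (czc Z - xs) - cL (i - cznc Z)),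
       cznc = cznc Z + p \<rparr>"

fun cz_run :: "('n::finite) sinfo list \<Rightarrow> 'n cz \<Rightarrow> 'n cz" where
  "cz_run [] Z = Z"
| "cz_run (s # ss) Z = cz_run ss (cz_step s Z)"

fun choice_ok :: "('n::finite) sinfo \<Rightarrow> 'n cz \<Rightarrow> bool" where
  "choice_ok (SLin p H y r) Z = True"
| "choice_ok (SNonlin p h r xs J cL GL nL) Z =
     (\<forall>x\<in>czset Z. (\<lambda>l. h x l - h xs l - J l \<bullet> (x - xs)) \<in> zono p cL GL nL)"

fun choices_ok :: "('n::finite) sinfo list \<Rightarrow> 'n cz \<Rightarrow> bool" where
  "choices_ok [] Z = True"
| "choices_ok (s # ss) Z = (choice_ok s Z \<and> choices_ok ss (cz_step s Z))"

end

theory Submission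
  imports Defs
begin

text \<open>A point x of the reachable set has a witness \<beta> for the initial constrained zonotope.
 Side information |H x - y| \<le> r is rewritten as the equality H x - y = r t with a new
 slack vector |t| \<le> 1; since x - c = G \<beta>, this is the linear constraint
 H G \<beta> - diag(r) t = y - H c.  For nonlinear information |h x| \<le> r one writes
 h x = r t as well and replaces h x by its linearization plus the remainder
 cL + GL \<gamma>, which the enclosing zonotope provides with |\<gamma>| \<le> 1.  Appending t and \<gamma> as
 generators with zero columns leaves the point unchanged, so (\<beta>, t, \<gamma>) witnesses x in
 the updated set, and induction over the side information finishes the argument.\<close>

lemma sum_lessThan_add:
  fixes n m :: nat
  shows "(\<Sum>j<n + m. f j) = (\<Sum>j<n. f j) + (\<Sum>k<m. f (n + k))"
  by (induction m) (auto simp: add.commute add.left_commute)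

lemma sum_lessThan_delta_mult:
  fixes t :: "nat \<Rightarrow> 'a::semiring_0"
  assumes "l < p"
  shows "(\<Sum>k<p. (if k = l then a else 0) * t k) = a * t l"
proof -
  have "(\<Sum>k<p. (if k = l then a else 0) * t k) = (\<Sum>k<p. if k = l then a * t k else 0)"
    by (rule sum.cong) auto
  then show ?thesis
    using assms by simp
qed

lemma abs_le_unit_scaleE:
  fixes a r :: real
  assumes "\<bar>a\<bar> \<le> r"
  obtains t where "\<bar>t\<bar> \<le> 1" "a = r * t"
proof (cases "r = 0")
  case True
  then show ?thesis using assms that[of 0] by simp
next
  case False
  with assms have "r > 0" by linarith
  then show ?thesis using assms that[of "a / r"] by (simp add: abs_divide)
qed

lemma mem_czsetE:
  assumes "x \<in> czset Z"
  obtains \<beta> where "x = czc Z + (\<Sum>j<czng Z. \<beta> j *\<^sub>R czG Z j)"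
    and "\<forall>j<czng Z. \<bar>\<beta> j\<bar> \<le> 1"
    and "\<forall>i<cznc Z. (\<Sum>j<czng Z. czA Z i j * \<beta> j) = czb Z i"
  using assms unfolding czset_def by blast

lemma mem_czsetI:
  assumes "x = czc Z + (\<Sum>j<czng Z. \<beta> j *\<^sub>R czG Z j)"
    and "\<forall>j<czng Z. \<bar>\<beta> j\<bar> \<le> 1"
    and "\<forall>i<cznc Z. (\<Sum>j<czng Z. czA Z i j * \<beta> j) = czb Z i"
  shows "x \<in> czset Z"
  using assms unfolding czset_def by blast

lemma mem_czset_cz_step_SLin:
  assumes x_Z: "x \<in> czset Z" and x_S: "x \<in> sinfo_set (SLin p H y r)"
  shows "x \<in> czset (cz_step (SLin p H y r) Z)"
proof -
  obtain \<beta> where x: "x = czc Z + (\<Sum>j<czng Z. \<beta> j *\<^sub>R czG Z j)"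
    and \<beta>_bound: "\<forall>j<czng Z. \<bar>\<beta> j\<bar> \<le> 1"
    and \<beta>_constr: "\<forall>i<cznc Z. (\<Sum>j<czng Z. czA Z i j * \<beta> j) = czb Z i"
    using x_Z by (rule mem_czsetE)
  have "\<forall>l. \<exists>t. l < p \<longrightarrow> \<bar>t\<bar> \<le> 1 \<and> H l \<bullet> x - y l = r l * t"
    using x_S by (auto elim: abs_le_unit_scaleE)
  then obtain t where t_bound: "\<And>l. l < p \<Longrightarrow> \<bar>t l\<bar> \<le> 1"
    and t_slack: "\<And>l. l < p \<Longrightarrow> H l \<bullet> x - y l = r l * t l"
    by metis
  define \<beta>' where "\<beta>' j = (if j < czng Z then \<beta> j else t (j - czng Z))" for j
  let ?Z = "cz_step (SLin p H y r) Z"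
  have new_row: "(\<Sum>j<czng ?Z. czA ?Z i j * \<beta>' j) = czb ?Z i"
    if "cznc Z \<le> i" "i < cznc ?Z" for i
  proof -
    define l where "l = i - cznc Z"
    have l: "l < p" using that by (simp add: l_def)
    have "(\<Sum>j<czng ?Z. czA ?Z i j * \<beta>' j) =
        (\<Sum>j<czng Z. (H l \<bullet> czG Z j) * \<beta> j) + (\<Sum>k<p. (if k = l then - r l else 0) * t k)"
      using that unfolding l_def by (simp add: sum_lessThan_add \<beta>'_def)
    also have "\<dots> = H l \<bullet> (x - czc Z) - r l * t l"
      using l by (simp only: sum_lessThan_delta_mult) (simp add: x inner_sum_right mult.commute)
    also have "\<dots> = czb ?Z i"
      using t_slack[OF l] that by (simp add: l_def inner_diff_right)
    finally show ?thesis .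
  qed
  show ?thesis
  proof (rule mem_czsetI[where \<beta> = \<beta>'])
    show "x = czc ?Z + (\<Sum>j<czng ?Z. \<beta>' j *\<^sub>R czG ?Z j)"
      using x by (simp add: sum_lessThan_add \<beta>'_def)
    show "\<forall>j<czng ?Z. \<bar>\<beta>' j\<bar> \<le> 1"
      using \<beta>_bound t_bound by (auto simp: \<beta>'_def)
    show "\<forall>i<cznc ?Z. (\<Sum>j<czng ?Z. czA ?Z i j * \<beta>' j) = czb ?Z i"
      using \<beta>_constr new_row by (auto simp: sum_lessThan_add \<beta>'_def not_less)
  qed
qed

lemma mem_czset_cz_step_SNonlin:
  assumes x_Z: "x \<in> czset Z" and x_S: "x \<in> sinfo_set (SNonlin p h r xs J cL GL nL)"
    and enclosure: "choice_ok (SNonlin p h r xs J cL GL nL) Z"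
  shows "x \<in> czset (cz_step (SNonlin p h r xs J cL GL nL) Z)"
proof -
  obtain \<beta> where x: "x = czc Z + (\<Sum>j<czng Z. \<beta> j *\<^sub>R czG Z j)"
    and \<beta>_bound: "\<forall>j<czng Z. \<bar>\<beta> j\<bar> \<le> 1"
    and \<beta>_constr: "\<forall>i<cznc Z. (\<Sum>j<czng Z. czA Z i j * \<beta> j) = czb Z i"
    using x_Z by (rule mem_czsetE)
  have "(\<lambda>l. h x l - h xs l - J l \<bullet> (x - xs)) \<in> zono p cL GL nL"
    using x_Z enclosure by simp
  then obtain \<gamma> where \<gamma>_bound: "\<forall>j<nL. \<bar>\<gamma> j\<bar> \<le> 1"
    and remainder: "\<And>l. l < p \<Longrightarrow> h x l - h xs l - J l \<bullet> (x - xs) = cL l + (\<Sum>j<nL. GL l j * \<gamma> j)"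
    unfolding zono_def by blast
  have "\<forall>l. \<exists>t. l < p \<longrightarrow> \<bar>t\<bar> \<le> 1 \<and> h x l = r l * t"
    using x_S by (auto elim: abs_le_unit_scaleE)
  then obtain t where t_bound: "\<And>l. l < p \<Longrightarrow> \<bar>t l\<bar> \<le> 1"
    and t_slack: "\<And>l. l < p \<Longrightarrow> h x l = r l * t l"
    by metis
  define \<beta>' where "\<beta>' j = (if j < czng Z then \<beta> j else if j < czng Z + p then t (j - czng Z)
     else \<gamma> (j - czng Z - p))" for j
  let ?Z = "cz_step (SNonlin p h r xs J cL GL nL) Z"
  have new_row: "(\<Sum>j<czng ?Z. czA ?Z i j * \<beta>' j) = czb ?Z i"
    if "cznc Z \<le> i" "i < cznc ?Z" for i
  proof -
    define l where "l = i - cznc Z"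
    have l: "l < p" using that by (simp add: l_def)
    have "(\<Sum>j<czng ?Z. czA ?Z i j * \<beta>' j) =
        (\<Sum>j<czng Z. (J l \<bullet> czG Z j) * \<beta> j) + (\<Sum>k<p. (if k = l then - r l else 0) * t k)
        + (\<Sum>k<nL. GL l k * \<gamma> k)"
      using that unfolding l_def by (simp add: sum_lessThan_add \<beta>'_def)
    also have "\<dots> = J l \<bullet> (x - czc Z) - r l * t l + (\<Sum>k<nL. GL l k * \<gamma> k)"
      using l by (simp only: sum_lessThan_delta_mult) (simp add: x inner_sum_right mult.commute)
    also have "\<dots> = czb ?Z i"
      using t_slack[OF l] remainder[OF l] that
      by (simp add: l_def[symmetric] inner_diff_right algebra_simps)
    finally show ?thesis .
  qed
  show ?thesis
  proof (rule mem_czsetI[where \<beta> = \<beta>'])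
    show "x = czc ?Z + (\<Sum>j<czng ?Z. \<beta>' j *\<^sub>R czG ?Z j)"
      using x by (simp add: sum_lessThan_add \<beta>'_def)
    show "\<forall>j<czng ?Z. \<bar>\<beta>' j\<bar> \<le> 1"
      using \<beta>_bound t_bound \<gamma>_bound by (auto simp: \<beta>'_def)
    show "\<forall>i<cznc ?Z. (\<Sum>j<czng ?Z. czA ?Z i j * \<beta>' j) = czb ?Z i"
      using \<beta>_constr new_row by (auto simp: sum_lessThan_add \<beta>'_def not_less)
  qed
qed

lemma mem_czset_cz_step:
  assumes "x \<in> czset Z" "x \<in> sinfo_set s" "choice_ok s Z"
  shows "x \<in> czset (cz_step s Z)"
  using assms mem_czset_cz_step_SLin mem_czset_cz_step_SNonlin by (cases s) blast+

lemma mem_czset_cz_run: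
  assumes "x \<in> czset Z" "\<forall>s\<in>set S. x \<in> sinfo_set s" "choices_ok S Z"
  shows "x \<in> czset (cz_run S Z)"
  using assms by (induction S arbitrary: Z) (auto intro: mem_czset_cz_step)

theorem theorem2:
  fixes R :: "(real^'n::finite) set" and Zhat :: "'n cz" and S :: "'n sinfo list"
  assumes "R \<subseteq> czset Zhat"
    and "\<forall>s\<in>set S. wf_sinfo s"
    and "\<forall>s\<in>set S. R \<subseteq> sinfo_set s"
    and "choices_ok S Zhat"
  shows "R \<subseteq> czset (cz_run S Zhat)"
  using assms(1,3,4) mem_czset_cz_run by blast

end
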